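(* Let $f\in\mathcal B_0$ and $z=x+iy\in\overline{\mathbb C}_+$. Then \[ f(z)=\frac4\pi\int_0^\infty\alpha(x+\alpha)\int_{\mathbb R}\frac{f''(\alpha+i\beta)}{(x+\alpha)^2+(y-\beta)^2}\,d\beta\,d\alpha . \]
   Context: $\mathbb C_+=\{z:\Re z>0\}$. $\mathcal B$ is the space of holomorphic $f$ on $\mathbb C_+$ with $\|f\|_{\mathcal B_0}:=\int_0^\infty\sup_{\beta\in\mathbb R}|f'(\alpha+i\beta)|\,d\alpha<\infty$; such $f$ are bounded, $f(\infty):=\lim_{\Re z\to\infty}f(z)$ exists, and $f$ extends continuously to $\overline{\mathbb C}_+$. $\mathcal B_0:=\{f\in\mathcal B: f(\infty)=0\}$. *)

theory Defs
  imports "HOL-Complex_Analysis.Complex_Analysis"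
begin

definition rhp :: "complex set" where
  "rhp = {z. Re z > 0}"

definition in_B :: "(complex \<Rightarrow> complex) \<Rightarrow> bool" where
  "in_B f \<longleftrightarrow> f holomorphic_on rhp \<and>
     (\<integral>\<^sup>+ a. indicator {0<..} a *
        (SUP b::real. ennreal (cmod (deriv f (Complex a b)))) \<partial>lborel) < \<infinity>"

text \<open>f(oo) = lim_{Re z -> oo} f(z) (uniformly in Im z).\<close>
definition value_at_infinity :: "(complex \<Rightarrow> complex) \<Rightarrow> complex \<Rightarrow> bool" where
  "value_at_infinity f c \<longleftrightarrow> (f \<longlongrightarrow> c) (filtercomap Re at_top)"

definition in_B0 :: "(complex \<Rightarrow> complex) \<Rightarrow> bool" where
  "in_B0 f \<longleftrightarrow> in_B f \<and> value_at_infinity f 0"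

definition ext_val :: "(complex \<Rightarrow> complex) \<Rightarrow> complex \<Rightarrow> complex" where
  "ext_val f z = Lim (at z within rhp) f"

end

theory Submission
  imports Defs "HOL-Real_Asymp.Real_Asymp"
begin

text \<open>First, for fixed \<open>\<alpha> > 0\<close> the function \<open>f''\<close> is holomorphic and bounded on \<open>Re w \<ge> \<alpha>\<close>, so it is the
  Poisson integral of its values on the line \<open>Re w = \<alpha>\<close>; evaluated at \<open>\<alpha> + (x + \<alpha>) + i y = z + 2 \<alpha>\<close> this
  says that the inner integral equals \<open>\<pi> f''(z + 2\<alpha>) / (x + \<alpha>)\<close>. The Poisson formula itself follows from
  the Cauchy integral formula on large rectangles whose left side lies on the line.

  Second, \<open>\<integral>\<^sub>0\<^sup>\<infinity> t f''(z + 2t) dt = f(z)/4\<close> by an integration by parts. It rests on the representation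
  \<open>f(w) = - \<integral>\<^sub>0\<^sup>\<infinity> f'(w + t) dt\<close>, which extends to the boundary by dominated convergence with the
  dominating function \<open>G(t) = sup\<^sub>\<beta> |f'(t + i\<beta>)|\<close>: \<open>G\<close> is integrable by the definition of \<open>\<B>\<close>, and by
  the Phragmen-Lindelof principle (again a consequence of the Poisson formula) \<open>G(s)\<close> bounds \<open>|f'|\<close> on the
  whole half-plane \<open>Re w \<ge> s\<close>. The same bound, through \<open>t |f'(z + 2t)| \<le> \<integral>\<^sub>t\<^sup>2\<^sup>t G\<close>, kills the boundary terms.\<close>

section \<open>The Poisson integral on a half-plane\<close>

lemma has_bochner_integral_Cauchy_kernel:
  fixes c y :: real
  assumes c: "c > 0"
  shows "has_bochner_integral lborel (\<lambda>b. 1 / (c\<^sup>2 + (y - b)\<^sup>2)) (pi / c)"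
proof -
  let ?F = "\<lambda>b. arctan ((b - y) / c) / c"
  have pos: "c\<^sup>2 + (y - b)\<^sup>2 > 0" for b
    using c by (simp add: add_pos_nonneg)
  have deriv: "(?F has_real_derivative 1 / (c\<^sup>2 + (y - b)\<^sup>2)) (at b)" for b
  proof -
    have "1 + ((b - y) / c)\<^sup>2 = (c\<^sup>2 + (y - b)\<^sup>2) / c\<^sup>2"
      using c by (simp add: field_simps power2_commute)
    then have "inverse (1 + ((b - y) / c)\<^sup>2) * (1 / c) / c = 1 / (c\<^sup>2 + (y - b)\<^sup>2)"
      using c by (simp add: power2_eq_square)
    moreover have "(?F has_real_derivative inverse (1 + ((b - y) / c)\<^sup>2) * (1 / c) / c) (at b)"
      using c by (auto intro!: derivative_eq_intros)
    ultimately show ?thesis by simp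
  qed
  have "(?F \<longlongrightarrow> - (pi / 2) / c) at_bot"
    using c by (intro tendsto_intros filterlim_compose[OF tendsto_arctan_at_bot]) (real_asymp, simp)
  then have lim_bot: "((?F \<circ> real_of_ereal) \<longlongrightarrow> - (pi / 2) / c) (at_right (- \<infinity>))"
    by (simp add: ereal_tendsto_simps1)
  have "(?F \<longlongrightarrow> (pi / 2) / c) at_top"
    using c by (intro tendsto_intros filterlim_compose[OF tendsto_arctan_at_top]) (real_asymp, simp)
  then have lim_top: "((?F \<circ> real_of_ereal) \<longlongrightarrow> (pi / 2) / c) (at_left \<infinity>)"
    by (simp add: ereal_tendsto_simps1)
  note FTC = interval_integral_FTC_nonneg[where a = "-\<infinity>" and b = \<infinity> and F = ?F,
      OF _ deriv _ _ lim_bot lim_top]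
  have cont: "isCont (\<lambda>b. 1 / (c\<^sup>2 + (y - b)\<^sup>2)) b" for b
    using pos[of b] by (intro continuous_intros) auto
  show ?thesis
    using FTC cont pos
    by (auto simp: has_bochner_integral_iff set_integrable_def interval_lebesgue_integral_def
        set_lebesgue_integral_def less_imp_le)
qed

lemma Cauchy_integral_rectpath:
  assumes hol: "\<phi> holomorphic_on S" and S: "open S" "convex S" "cbox a b \<subseteq> S"
    and \<zeta>: "\<zeta> \<in> box a b"
  shows "((\<lambda>w. \<phi> w / (w - \<zeta>)) has_contour_integral 2 * pi * \<i> * \<phi> \<zeta>) (rectpath a b)"
proof -
  have le: "Re a \<le> Re b" "Im a \<le> Im b"
    using \<zeta> by (auto simp: in_box_complex_iff)
  have "path_image (rectpath a b) \<subseteq> S - {\<zeta>}"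
    using path_image_rectpath_cbox_minus_box[OF le] S(3) \<zeta> by auto
  moreover have "\<zeta> \<in> interior S"
    using \<zeta> S box_subset_cbox interior_open by blast
  ultimately have "((\<lambda>w. \<phi> w / (w - \<zeta>)) has_contour_integral
      2 * pi * \<i> * winding_number (rectpath a b) \<zeta> * \<phi> \<zeta>) (rectpath a b)"
    using Cauchy_integral_formula_convex_simple[OF S(2) hol _ valid_path_rectpath] by simp
  then show ?thesis
    using winding_number_rectpath[OF \<zeta>] by simp
qed

lemma path_image_rectpath_eq_sides:
  "path_image (rectpath a b) = closed_segment a (Complex (Re b) (Im a)) \<union> closed_segment (Complex (Re b) (Im a)) b
    \<union> closed_segment b (Complex (Re a) (Im b)) \<union> closed_segment (Complex (Re a) (Im b)) a"
  by (simp add: rectpath_def Let_def path_image_join Un_assoc)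

lemma contour_integral_rectpath_eq_sides:
  assumes cont: "continuous_on (path_image (rectpath a b)) k"
  defines "a2 \<equiv> Complex (Re b) (Im a)" and "a4 \<equiv> Complex (Re a) (Im b)"
  shows "contour_integral (rectpath a b) k = contour_integral (linepath a a2) k
    + contour_integral (linepath a2 b) k + contour_integral (linepath b a4) k - contour_integral (linepath a a4) k"
proof -
  have rp: "rectpath a b = linepath a a2 +++ linepath a2 b +++ linepath b a4 +++ linepath a4 a"
    by (simp add: rectpath_def Let_def a2_def a4_def)
  have cont_sides: "continuous_on (closed_segment a a2) k" "continuous_on (closed_segment a2 b) k"
      "continuous_on (closed_segment b a4) k" "continuous_on (closed_segment a4 a) k"
    using cont unfolding path_image_rectpath_eq_sides a2_def a4_def by (auto elim: continuous_on_subset)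
  then have "contour_integral (linepath a4 a) k = - contour_integral (linepath a a4) k"
    by (intro contour_integral_reverse_linepath) (simp add: closed_segment_commute)
  then show ?thesis
    unfolding rp using cont_sides
    by (simp add: contour_integrable_continuous_linepath contour_integrable_joinI)
qed

lemma norm_contour_integral_rectpath_plus_left_side_le:
  assumes cont: "continuous_on (path_image (rectpath a b)) k"
    and le: "Re a \<le> Re b" "Im a < Im b" and K: "K \<ge> 0"
    and bnd: "\<And>w. w \<in> cbox a b \<Longrightarrow> Re w = Re b \<or> Im w = Im a \<or> Im w = Im b \<Longrightarrow> cmod (k w) \<le> K"
  shows "cmod (contour_integral (rectpath a b) k + \<i> * integral {Im a..Im b} (\<lambda>t. k (Complex (Re a) t)))
    \<le> K * (2 * (Re b - Re a) + (Im b - Im a))"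
proof -
  define a2 a4 where "a2 = Complex (Re b) (Im a)" and "a4 = Complex (Re a) (Im b)"
  let ?I1 = "contour_integral (linepath a a2) k" and ?I2 = "contour_integral (linepath a2 b) k"
    and ?I3 = "contour_integral (linepath b a4) k"
  have "contour_integral (linepath a a4) k = \<i> * integral {Im a..Im b} (\<lambda>t. k (Complex (Re a) t))"
    using le by (intro contour_integral_linepath_same_Re) (auto simp: a4_def)
  then have "cmod (contour_integral (rectpath a b) k + \<i> * integral {Im a..Im b} (\<lambda>t. k (Complex (Re a) t)))
      = cmod (?I1 + ?I2 + ?I3)"
    using contour_integral_rectpath_eq_sides[OF cont] by (simp add: a2_def a4_def)
  also have "\<dots> \<le> cmod ?I1 + cmod ?I2 + cmod ?I3"
    by (rule order_trans[OF norm_triangle_ineq add_right_mono[OF norm_triangle_ineq]])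
  also have "\<dots> \<le> K * cmod (a2 - a) + K * cmod (b - a2) + K * cmod (a4 - b)"
  proof -
    have side: "cmod (k w) \<le> K"
      if "w \<in> closed_segment a a2 \<union> closed_segment a2 b \<union> closed_segment b a4" for w
      using that le
      by (intro bnd) (auto simp: a2_def a4_def closed_segment_same_Im closed_segment_same_Re
          closed_segment_eq_real_ivl in_cbox_complex_iff split: if_splits)
    have "k contour_integrable_on linepath a a2" "k contour_integrable_on linepath a2 b"
        "k contour_integrable_on linepath b a4"
      using cont unfolding path_image_rectpath_eq_sides a2_def a4_def
      by (auto intro!: contour_integrable_continuous_linepath elim: continuous_on_subset)
    then show ?thesis
      by (intro add_mono contour_integral_bound_linepath K) (auto intro: side)
  qed
  also have "\<dots> = K * (2 * (Re b - Re a) + (Im b - Im a))"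
    using le by (simp add: a2_def a4_def cmod_eq_Re cmod_eq_Im algebra_simps)
  finally show ?thesis .
qed

lemma continuous_on_vertical_line:
  assumes "continuous_on S h" "\<And>b. Complex a b \<in> S"
  shows "continuous_on UNIV (\<lambda>b. h (Complex a b))"
proof -
  have "continuous_on UNIV (\<lambda>b::real. of_real a + \<i> * of_real b)"
    by (intro continuous_intros)
  then show ?thesis
    using assms by (auto simp: Complex_eq intro: continuous_on_compose2[OF assms(1)])
qed

lemma set_integral_symmetric_interval_tendsto:
  fixes f :: "real \<Rightarrow> 'a::{banach, second_countable_topology}"
  assumes "integrable lborel f"
  shows "((\<lambda>R. LINT x:{-R..R}|lborel. f x) \<longlongrightarrow> integral\<^sup>L lborel f) at_top"
  unfolding set_lebesgue_integral_def
proof (rule integral_dominated_convergence_at_top[where w = "\<lambda>x. norm (f x)"])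
  show "AE x in lborel. ((\<lambda>R. indicator {-R..R} x *\<^sub>R f x) \<longlongrightarrow> f x) at_top"
  proof (rule AE_I2)
    fix x :: real
    have "eventually (\<lambda>R. indicator {-R..R} x *\<^sub>R f x = f x) at_top"
      using eventually_ge_at_top[of "\<bar>x\<bar>"] by eventually_elim (auto simp: indicator_def)
    then show "((\<lambda>R. indicator {-R..R} x *\<^sub>R f x) \<longlongrightarrow> f x) at_top"
      by (rule tendsto_eventually)
  qed
qed (use assms in \<open>auto simp: indicator_def intro: always_eventually\<close>)

text \<open>\<open>Complex (a - c) y\<close> is the mirror image of \<open>\<zeta> = Complex (a + c) y\<close> in the line \<open>Re w = a\<close>.
  The kernel has residue \<open>-h \<zeta>\<close> at \<open>\<zeta>\<close>, and on the line it is \<open>2 c\<close> times the Poisson kernel.\<close>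
definition Poisson_rect_kernel :: "(complex \<Rightarrow> complex) \<Rightarrow> real \<Rightarrow> real \<Rightarrow> real \<Rightarrow> complex \<Rightarrow> complex" where
  "Poisson_rect_kernel h a c y w =
    of_real (2 * c) * h w / ((Complex (a - c) y - w) * (w - Complex (a + c) y))"

lemma Poisson_rect_kernel_on_line:
  "Poisson_rect_kernel h a c y (Complex a b) = of_real (2 * c) * (h (Complex a b) / of_real (c\<^sup>2 + (y - b)\<^sup>2))"
proof -
  have "(Complex (a - c) y - Complex a b) * (Complex a b - Complex (a + c) y) = of_real (c\<^sup>2 + (y - b)\<^sup>2)"
    by (simp add: complex_eq_iff power2_eq_square algebra_simps)
  then show ?thesis
    by (simp add: Poisson_rect_kernel_def)
qed

lemma continuous_on_Poisson_rect_kernel: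
  assumes hol: "h holomorphic_on {w. Re w > a0}" and c: "c > 0"
  shows "continuous_on ({w. Re w > max a0 (a - c)} - {Complex (a + c) y}) (Poisson_rect_kernel h a c y)"
proof -
  have "(Complex (a - c) y - w) * (w - Complex (a + c) y) \<noteq> 0"
    if "w \<in> {w. Re w > max a0 (a - c)} - {Complex (a + c) y}" for w
  proof -
    have "w \<noteq> Complex (a - c) y" "w \<noteq> Complex (a + c) y"
      using that by auto
    then show ?thesis
      by simp
  qed
  then show ?thesis
    unfolding Poisson_rect_kernel_def[abs_def]
    by (intro holomorphic_on_imp_continuous_on holomorphic_intros holomorphic_on_subset[OF hol]) auto
qed

lemma contour_integral_Poisson_rect_kernel:
  assumes hol: "h holomorphic_on {w. Re w > a0}" and a: "a0 < a" and c: "c > 0" and R: "R > \<bar>y\<bar> + c"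
  defines "lo \<equiv> Complex a (-R)" and "hi \<equiv> Complex (a + R) R"
  shows "contour_integral (rectpath lo hi) (Poisson_rect_kernel h a c y) = - 2 * pi * \<i> * h (Complex (a + c) y)"
proof -
  define \<zeta> where "\<zeta> = Complex (a + c) y"
  define \<phi> where "\<phi> w = of_real (2 * c) * h w / (Complex (a - c) y - w)" for w
  define S where "S = {w. Re w > max a0 (a - c)}"
  have "\<phi> holomorphic_on S"
    unfolding \<phi>_def S_def by (intro holomorphic_intros holomorphic_on_subset[OF hol]) auto
  moreover have "open S" "convex S"
    unfolding S_def by (rule open_halfspace_Re_gt, rule convex_halfspace_Re_gt)
  moreover have "cbox lo hi \<subseteq> S" "\<zeta> \<in> box lo hi"
    using a c R by (auto simp: in_cbox_complex_iff in_box_complex_iff lo_def hi_def S_def \<zeta>_def)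
  ultimately have "((\<lambda>w. \<phi> w / (w - \<zeta>)) has_contour_integral 2 * pi * \<i> * \<phi> \<zeta>) (rectpath lo hi)"
    by (rule Cauchy_integral_rectpath)
  moreover have "(\<lambda>w. \<phi> w / (w - \<zeta>)) = Poisson_rect_kernel h a c y"
    by (simp add: fun_eq_iff Poisson_rect_kernel_def \<phi>_def \<zeta>_def divide_divide_eq_left)
  moreover have "\<phi> \<zeta> = - h \<zeta>"
  proof -
    have "Complex (a - c) y - \<zeta> = - of_real (2 * c)"
      by (simp add: \<zeta>_def complex_eq_iff)
    then show ?thesis
      using c by (simp add: \<phi>_def)
  qed
  ultimately show ?thesis
    by (simp add: contour_integral_unique \<zeta>_def)
qed

lemma norm_Poisson_rect_kernel_le:
  assumes bnd: "\<And>w. Re w \<ge> a \<Longrightarrow> cmod (h w) \<le> B" and c: "c > 0" and R: "R > \<bar>y\<bar> + c"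
    and w: "w \<in> cbox (Complex a (-R)) (Complex (a + R) R)" "Re w = a + R \<or> Im w = -R \<or> Im w = R"
  shows "cmod (Poisson_rect_kernel h a c y w) \<le> 2 * c * B / (R - \<bar>y\<bar> - c)\<^sup>2"
proof -
  define \<zeta> \<zeta>' where "\<zeta> = Complex (a + c) y" and "\<zeta>' = Complex (a - c) y"
  define \<rho> where "\<rho> = R - \<bar>y\<bar> - c"
  have \<rho>: "\<rho> > 0"
    using R by (simp add: \<rho>_def)
  have "cmod (h (of_real a)) \<le> B"
    by (rule bnd) simp
  then have B: "B \<ge> 0"
    using norm_ge_zero order_trans by blast
  have "(\<rho> \<le> \<bar>Im (w - \<zeta>)\<bar> \<and> \<rho> \<le> \<bar>Im (\<zeta>' - w)\<bar>) \<or> (\<rho> \<le> \<bar>Re (w - \<zeta>)\<bar> \<and> \<rho> \<le> \<bar>Re (\<zeta>' - w)\<bar>)"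
    using w c by (auto simp: \<zeta>_def \<zeta>'_def \<rho>_def)
  then have "\<rho> \<le> cmod (w - \<zeta>) \<and> \<rho> \<le> cmod (\<zeta>' - w)"
    using abs_Im_le_cmod abs_Re_le_cmod order_trans by metis
  moreover have "Re w \<ge> a"
    using w by (auto simp: in_cbox_complex_iff)
  ultimately have "cmod (h w) * (2 * c) / (cmod (\<zeta>' - w) * cmod (w - \<zeta>)) \<le> B * (2 * c) / (\<rho> * \<rho>)"
    using bnd B c \<rho> by (intro frac_le mult_mono) auto
  then show ?thesis
    using c by (simp add: Poisson_rect_kernel_def \<zeta>_def \<zeta>'_def \<rho>_def norm_mult norm_divide power2_eq_square mult_ac)
qed

lemma integral_Poisson_rect_kernel_on_line:
  assumes hol: "h holomorphic_on {w. Re w > a0}" and a: "a0 < a" and c: "c > 0"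
  shows "integral {-R..R} (\<lambda>b. Poisson_rect_kernel h a c y (Complex a b))
    = of_real (2 * c) * (LINT b:{-R..R}|lborel. h (Complex a b) / of_real (c\<^sup>2 + (y - b)\<^sup>2))"
proof -
  have "set_integrable lborel {-R..R} (\<lambda>b. Poisson_rect_kernel h a c y (Complex a b))"
    unfolding set_integrable_def using continuous_on_Poisson_rect_kernel[OF hol c] a c
    by (intro borel_integrable_compact continuous_on_subset[OF continuous_on_vertical_line]) auto
  then have "integral {-R..R} (\<lambda>b. Poisson_rect_kernel h a c y (Complex a b))
      = (LINT b:{-R..R}|lborel. Poisson_rect_kernel h a c y (Complex a b))"
    by (rule set_borel_integral_eq_integral(2)[symmetric])
  also have "\<dots> = (LINT b:{-R..R}|lborel. of_real (2 * c) * (h (Complex a b) / of_real (c\<^sup>2 + (y - b)\<^sup>2)))"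
    by (simp only: Poisson_rect_kernel_on_line)
  also have "\<dots> = of_real (2 * c) * (LINT b:{-R..R}|lborel. h (Complex a b) / of_real (c\<^sup>2 + (y - b)\<^sup>2))"
    by (rule set_integral_mult_right)
  finally show ?thesis .
qed

lemma Poisson_rectangle_estimate:
  fixes h :: "complex \<Rightarrow> complex"
  assumes hol: "h holomorphic_on {w. Re w > a0}" and a: "a0 < a" and c: "c > 0"
    and bnd: "\<And>w. Re w \<ge> a \<Longrightarrow> cmod (h w) \<le> B" and R: "R > \<bar>y\<bar> + c"
  shows "cmod (of_real (2 * c) * (LINT b:{-R..R}|lborel. h (Complex a b) / of_real (c\<^sup>2 + (y - b)\<^sup>2))
      - 2 * pi * h (Complex (a + c) y)) \<le> 8 * c * B * R / (R - \<bar>y\<bar> - c)\<^sup>2"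
proof -
  define lo hi where "lo = Complex a (-R)" and "hi = Complex (a + R) R"
  let ?k = "Poisson_rect_kernel h a c y" and ?F = "\<lambda>b. h (Complex a b) / of_real (c\<^sup>2 + (y - b)\<^sup>2)"
  have R0: "R > 0"
    using R c by linarith
  have cont: "continuous_on ({w. Re w > max a0 (a - c)} - {Complex (a + c) y}) ?k"
    by (rule continuous_on_Poisson_rect_kernel[OF hol c])
  have "path_image (rectpath lo hi) = cbox lo hi - box lo hi"
    using R0 by (intro path_image_rectpath_cbox_minus_box) (auto simp: lo_def hi_def)
  also have "\<dots> \<subseteq> {w. Re w > max a0 (a - c)} - {Complex (a + c) y}"
    using a c R by (auto simp: in_cbox_complex_iff in_box_complex_iff lo_def hi_def)
  finally have cont_path: "continuous_on (path_image (rectpath lo hi)) ?k"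
    using cont by (rule continuous_on_subset[rotated])
  have far: "cmod (?k w) \<le> 2 * c * B / (R - \<bar>y\<bar> - c)\<^sup>2"
    if "w \<in> cbox lo hi" "Re w = Re hi \<or> Im w = Im lo \<or> Im w = Im hi" for w
    using that unfolding lo_def hi_def by (intro norm_Poisson_rect_kernel_le[OF bnd c R]) auto
  have "cmod (h (of_real a)) \<le> B"
    by (rule bnd) simp
  then have "B \<ge> 0"
    using norm_ge_zero order_trans by blast
  then have "cmod (contour_integral (rectpath lo hi) ?k + \<i> * integral {Im lo..Im hi} (\<lambda>b. ?k (Complex (Re lo) b)))
      \<le> 2 * c * B / (R - \<bar>y\<bar> - c)\<^sup>2 * (2 * (Re hi - Re lo) + (Im hi - Im lo))"
    using c R0 far by (intro norm_contour_integral_rectpath_plus_left_side_le cont_path) (auto simp: lo_def hi_def)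
  moreover have "contour_integral (rectpath lo hi) ?k = - 2 * pi * \<i> * h (Complex (a + c) y)"
    unfolding lo_def hi_def by (rule contour_integral_Poisson_rect_kernel[OF hol a c R])
  ultimately have "cmod (\<i> * (of_real (2 * c) * (LINT b:{-R..R}|lborel. ?F b) - 2 * pi * h (Complex (a + c) y)))
      \<le> 8 * c * B * R / (R - \<bar>y\<bar> - c)\<^sup>2"
    using integral_Poisson_rect_kernel_on_line[OF hol a c] R0 by (simp add: lo_def hi_def algebra_simps)
  then show ?thesis
    by (simp add: norm_mult)
qed

lemma norm_Poisson_integrand_le:
  assumes c: "c > 0" and m: "cmod (h (Complex a b)) \<le> m"
  shows "cmod (h (Complex a b) / of_real (c\<^sup>2 + (y - b)\<^sup>2)) \<le> m * (1 / (c\<^sup>2 + (y - b)\<^sup>2))"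
proof -
  have "c\<^sup>2 + (y - b)\<^sup>2 > 0"
    using c by (simp add: add_pos_nonneg)
  then show ?thesis
    using m by (simp add: norm_divide divide_right_mono del: of_real_add of_real_power of_real_diff)
qed

lemma integrable_Poisson_integrand:
  assumes cont: "continuous_on UNIV (\<lambda>b. h (Complex a b))" and c: "c > 0"
    and m: "\<And>b. cmod (h (Complex a b)) \<le> m"
  shows "integrable lborel (\<lambda>b. h (Complex a b) / of_real (c\<^sup>2 + (y - b)\<^sup>2))"
proof (rule Bochner_Integration.integrable_bound)
  show "integrable lborel (\<lambda>b. m * (1 / (c\<^sup>2 + (y - b)\<^sup>2)))"
    by (intro integrable_mult_right integrable.intros[OF has_bochner_integral_Cauchy_kernel[OF c]])
  have "complex_of_real (c\<^sup>2 + (y - b)\<^sup>2) \<noteq> 0" for b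
    using c by (simp only: of_real_eq_0_iff) (simp add: add_pos_nonneg less_imp_neq[symmetric])
  then have "continuous_on UNIV (\<lambda>b. h (Complex a b) / of_real (c\<^sup>2 + (y - b)\<^sup>2))"
    using cont by (intro continuous_intros) auto
  then show "(\<lambda>b. h (Complex a b) / of_real (c\<^sup>2 + (y - b)\<^sup>2)) \<in> borel_measurable lborel"
    by (simp add: borel_measurable_continuous_onI)
  show "AE b in lborel. norm (h (Complex a b) / of_real (c\<^sup>2 + (y - b)\<^sup>2)) \<le> norm (m * (1 / (c\<^sup>2 + (y - b)\<^sup>2)))"
  proof (rule AE_I2)
    fix b
    have "norm (h (Complex a b) / of_real (c\<^sup>2 + (y - b)\<^sup>2)) \<le> m * (1 / (c\<^sup>2 + (y - b)\<^sup>2))"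
      by (rule norm_Poisson_integrand_le[where h = h, OF c m])
    also have "\<dots> \<le> norm (m * (1 / (c\<^sup>2 + (y - b)\<^sup>2)))"
      by (simp only: real_norm_def abs_ge_self)
    finally show "norm (h (Complex a b) / of_real (c\<^sup>2 + (y - b)\<^sup>2)) \<le> norm (m * (1 / (c\<^sup>2 + (y - b)\<^sup>2)))" .
  qed
qed

theorem Poisson_integral_halfplane:
  fixes h :: "complex \<Rightarrow> complex"
  assumes hol: "h holomorphic_on {w. Re w > a0}" and a: "a0 < a" and c: "c > 0"
    and bnd: "\<And>w. Re w \<ge> a \<Longrightarrow> cmod (h w) \<le> B"
  shows "has_bochner_integral lborel (\<lambda>b. h (Complex a b) / of_real (c\<^sup>2 + (y - b)\<^sup>2))
    (of_real (pi / c) * h (Complex (a + c) y))"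
proof -
  let ?F = "\<lambda>b. h (Complex a b) / of_real (c\<^sup>2 + (y - b)\<^sup>2)"
  let ?I = "integral\<^sup>L lborel ?F"
  have "continuous_on UNIV (\<lambda>b. h (Complex a b))"
    by (rule continuous_on_vertical_line[OF holomorphic_on_imp_continuous_on[OF hol]]) (use a in simp)
  then have int: "integrable lborel ?F"
    using c bnd by (rule integrable_Poisson_integrand) simp
  have "((\<lambda>R. of_real (2 * c) * (LINT b:{-R..R}|lborel. ?F b)) \<longlongrightarrow> of_real (2 * c) * ?I) at_top"
    by (intro tendsto_intros set_integral_symmetric_interval_tendsto int)
  moreover have "((\<lambda>R. of_real (2 * c) * (LINT b:{-R..R}|lborel. ?F b)) \<longlongrightarrow> 2 * pi * h (Complex (a + c) y)) at_top"
  proof (rule Lim_null_comparison[THEN LIM_zero_cancel])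
    show "eventually (\<lambda>R. norm (of_real (2 * c) * (LINT b:{-R..R}|lborel. ?F b) - 2 * pi * h (Complex (a + c) y))
        \<le> 8 * c * B * R / (R - \<bar>y\<bar> - c)\<^sup>2) at_top"
      using eventually_gt_at_top[of "\<bar>y\<bar> + c"]
      by eventually_elim (rule Poisson_rectangle_estimate[OF hol a c bnd])
    show "((\<lambda>R. 8 * c * B * R / (R - \<bar>y\<bar> - c)\<^sup>2) \<longlongrightarrow> 0) at_top"
      by real_asymp
  qed
  ultimately have "of_real (2 * c) * ?I = 2 * pi * h (Complex (a + c) y)"
    by (rule tendsto_unique[rotated]) simp
  then have "?I = of_real (pi / c) * h (Complex (a + c) y)"
    using c by (simp add: field_simps)
  with int show ?thesis
    by (simp add: has_bochner_integral_iff)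
qed

text \<open>A Phragmen-Lindelof principle, read off from the Poisson representation.\<close>
corollary norm_le_on_halfplane_if_norm_le_on_line:
  fixes h :: "complex \<Rightarrow> complex"
  assumes hol: "h holomorphic_on {w. Re w > a0}" and a: "a0 < a"
    and bnd: "\<And>w. Re w \<ge> a \<Longrightarrow> cmod (h w) \<le> B"
    and line: "\<And>b. cmod (h (Complex a b)) \<le> m" and w: "Re w \<ge> a"
  shows "cmod (h w) \<le> m"
proof (cases "Re w = a")
  case True
  then show ?thesis
    using line[of "Im w"] by (metis complex.collapse)
next
  case False
  define c where "c = Re w - a"
  have c: "c > 0"
    using w False by (simp add: c_def)
  have w_eq: "Complex (a + c) (Im w) = w"
    by (simp add: c_def complex_eq_iff)
  let ?F = "\<lambda>b. h (Complex a b) / of_real (c\<^sup>2 + (Im w - b)\<^sup>2)"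
  let ?K = "\<lambda>b. 1 / (c\<^sup>2 + (Im w - b)\<^sup>2)"
  have F: "has_bochner_integral lborel ?F (of_real (pi / c) * h w)"
    using Poisson_integral_halfplane[OF hol a c bnd, of "Im w"] by (simp add: w_eq)
  have K: "has_bochner_integral lborel ?K (pi / c)"
    by (rule has_bochner_integral_Cauchy_kernel[OF c])
  have "integral\<^sup>L lborel ?F = of_real (pi / c) * h w"
    using F by (rule has_bochner_integral_integral_eq)
  then have "pi / c * cmod (h w) = norm (integral\<^sup>L lborel ?F)"
    using c by (simp only: norm_mult norm_of_real) simp
  also have "\<dots> \<le> (\<integral>b. norm (?F b) \<partial>lborel)"
    by (rule integral_norm_bound)
  also have "\<dots> \<le> (\<integral>b. m * ?K b \<partial>lborel)"
    using F norm_Poisson_integrand_le[where h = h, OF c line]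
    by (intro integral_mono integrable_mult_right integrable.intros[OF K]) (auto intro: integrable.intros)
  also have "\<dots> = m * (pi / c)"
    by (rule has_bochner_integral_integral_eq[OF has_bochner_integral_mult_right[OF K]])
  finally show ?thesis
    using c by (simp add: field_simps)
qed

lemma Cauchy_inequality_halfplane:
  fixes g :: "complex \<Rightarrow> complex"
  assumes hol: "g holomorphic_on {u. Re u > a}" and r: "0 < r" "a + r < Re w"
    and bnd: "\<And>u. Re w - r \<le> Re u \<Longrightarrow> cmod (g u) \<le> m"
  shows "cmod ((deriv ^^ n) g w) \<le> fact n * m / r ^ n"
proof -
  have Re_ge: "Re w - r \<le> Re u" if "dist w u \<le> r" for u
    using that abs_Re_le_cmod[of "w - u"] by (simp add: dist_norm)
  have sub: "cball w r \<subseteq> {u. Re u > a}"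
    using r Re_ge by force
  show ?thesis
  proof (rule Cauchy_inequality[OF _ _ r(1)])
    show "g holomorphic_on ball w r"
      using hol sub ball_subset_cball holomorphic_on_subset by blast
    show "continuous_on (cball w r) g"
      using holomorphic_on_imp_continuous_on[OF hol] sub by (rule continuous_on_subset)
    show "cmod (g u) \<le> m" if "cmod (w - u) = r" for u
      using that by (intro bnd Re_ge) (simp add: dist_norm)
  qed
qed

section \<open>Functions of the class \<open>\<B>\<^sub>0\<close>\<close>

lemma open_rhp: "open rhp"
  unfolding rhp_def by (rule open_halfspace_Re_gt)

lemma isCont_along_ray:
  assumes "continuous_on rhp g" and "z + of_real (c * t) \<in> rhp"
  shows "isCont (\<lambda>t. g (z + of_real (c * t))) t"
proof -
  have "isCont g (z + of_real (c * t))"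
    using assms continuous_on_eq_continuous_at[OF open_rhp] by blast
  then show ?thesis
    by (rule isCont_o2[rotated]) (intro continuous_intros)
qed

lemma borel_measurable_sup_norm_on_lines:
  assumes "continuous_on rhp g"
  shows "(\<lambda>s. indicator {0<..} s * (SUP b::real. ennreal (cmod (g (Complex s b))))) \<in> borel_measurable borel"
proof (rule borel_measurableI_greater)
  fix y :: ennreal
  have opens: "open {s \<in> {0<..}. y < ennreal (cmod (g (Complex s b)))}" for b
  proof -
    have "continuous_on {0<..} (\<lambda>s::real. of_real s + \<i> * of_real b)"
      by (intro continuous_intros)
    then have "continuous_on {0<..} (\<lambda>s. g (Complex s b))"
      using assms by (auto simp: Complex_eq rhp_def intro: continuous_on_compose2[OF assms])
    then have "continuous_on {0<..} (\<lambda>s. ennreal (cmod (g (Complex s b))))"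
      by (intro continuous_on_ennreal continuous_on_norm)
    then have "open ((\<lambda>s. ennreal (cmod (g (Complex s b)))) -` {y<..} \<inter> {0<..})"
      by (meson continuous_on_open_vimage open_greaterThan)
    moreover have "(\<lambda>s. ennreal (cmod (g (Complex s b)))) -` {y<..} \<inter> {0<..}
        = {s \<in> {0<..}. y < ennreal (cmod (g (Complex s b)))}"
      by auto
    ultimately show ?thesis
      by simp
  qed
  have "{s \<in> space borel. y < indicator {0<..} s * (SUP b::real. ennreal (cmod (g (Complex s b))))}
      = (\<Union>b. {s \<in> {0<..}. y < ennreal (cmod (g (Complex s b)))})"
    by (auto simp: less_SUP_iff indicator_def)
  then show "{s \<in> space borel. y < indicator {0<..} s * (SUP b::real. ennreal (cmod (g (Complex s b))))}
      \<in> sets borel"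
    using opens by (simp add: borel_open open_UN)
qed

lemma tendsto_compose_filtercomap_Re:
  assumes "(g \<longlongrightarrow> c) (filtercomap Re at_top)" and "filterlim (\<lambda>x. Re (\<phi> x)) at_top F"
  shows "((\<lambda>x. g (\<phi> x)) \<longlongrightarrow> c) F"
proof -
  have "filterlim \<phi> (filtercomap Re at_top) F"
    using assms(2) unfolding filterlim_def
    by (simp add: filtermap_le_iff_le_filtercomap[symmetric] filtermap_filtermap)
  then show ?thesis
    by (rule filterlim_compose[OF assms(1)])
qed

lemma set_integral_window_tendsto_zero:
  fixes g l u :: "real \<Rightarrow> real"
  assumes g: "integrable lborel g" and out: "\<And>s. eventually (\<lambda>x. s \<notin> {l x..u x}) at_top"
  shows "((\<lambda>x. LINT s:{l x..u x}|lborel. g s) \<longlongrightarrow> 0) at_top"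
proof -
  have lim: "AE s in lborel. ((\<lambda>x. indicator {l x..u x} s *\<^sub>R g s) \<longlongrightarrow> 0) at_top"
  proof (rule AE_I2)
    fix s
    show "((\<lambda>x. indicator {l x..u x} s *\<^sub>R g s) \<longlongrightarrow> 0) at_top"
      using out[of s] by (rule tendsto_eventually[OF eventually_mono]) simp
  qed
  have bnd: "\<forall>\<^sub>F x in at_top. AE s in lborel. norm (indicator {l x..u x} s *\<^sub>R g s) \<le> norm (g s)"
    by (intro always_eventually allI AE_I2) (simp add: indicator_def)
  have meas: "(\<lambda>s. indicator {l x..u x} s *\<^sub>R g s) \<in> borel_measurable lborel" for x
    using g by measurable
  show ?thesis
    using integral_dominated_convergence_at_top[OF _ meas integrable_norm[OF g] lim bnd]
    by (simp add: set_lebesgue_integral_def)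
qed

lemma eventually_notin_inverse_window:
  fixes s :: real
  shows "\<forall>\<^sub>F x in at_top. s \<notin> {inverse x..2 * inverse x}"
  using eventually_conj[OF eventually_gt_at_top[of 0] eventually_gt_at_top[of "2 / s"]]
proof eventually_elim
  case (elim x)
  show ?case
  proof (cases "s > 0")
    case True
    then have "2 * inverse x < s"
      using elim by (simp add: field_simps)
    then show ?thesis
      by auto
  next
    case False
    then have "s < inverse x"
      using elim by (simp add: not_less) (meson le_less_trans positive_imp_inverse_positive)
    then show ?thesis
      by simp
  qed
qed

locale B0_function =
  fixes f :: "complex \<Rightarrow> complex"
  assumes in_B0: "in_B0 f"
begin

definition B_density :: "real \<Rightarrow> ennreal" where
  "B_density s = indicator {0<..} s * (SUP b::real. ennreal (cmod (deriv f (Complex s b))))"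

lemma f_holomorphic: "f holomorphic_on rhp"
  using in_B0 by (simp add: in_B0_def in_B_def)

lemma nn_integral_B_density_finite: "integral\<^sup>N lborel B_density < \<infinity>"
  using in_B0 by (simp add: in_B0_def in_B_def B_density_def[abs_def])

lemma tendsto_zero_at_infinity: "(f \<longlongrightarrow> 0) (filtercomap Re at_top)"
  using in_B0 by (simp add: in_B0_def value_at_infinity_def)

lemma deriv_holomorphic: "deriv f holomorphic_on rhp"
  using f_holomorphic open_rhp by (rule holomorphic_deriv)

lemma deriv2_holomorphic: "deriv (deriv f) holomorphic_on rhp"
  using deriv_holomorphic open_rhp by (rule holomorphic_deriv)

lemma continuous_on_deriv: "continuous_on rhp (deriv f)"
  using deriv_holomorphic by (rule holomorphic_on_imp_continuous_on)

lemma borel_measurable_B_density: "B_density \<in> borel_measurable borel"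
  unfolding B_density_def[abs_def] using continuous_on_deriv by (rule borel_measurable_sup_norm_on_lines)

lemma norm_deriv_le_B_density: "s > 0 \<Longrightarrow> ennreal (cmod (deriv f (Complex s b))) \<le> B_density s"
  unfolding B_density_def by (auto intro!: SUP_upper)

lemma borel_measurable_deriv_ray:
  assumes "Re w \<ge> 0"
  shows "(\<lambda>t. indicator {0<..} t *\<^sub>R deriv f (w + of_real t)) \<in> borel_measurable borel"
proof -
  have "continuous_on {0<..} (\<lambda>t::real. w + of_real t)"
    by (intro continuous_intros)
  then have "continuous_on {0<..} (\<lambda>t. deriv f (w + of_real t))"
    using assms by (auto simp: rhp_def intro: continuous_on_compose2[OF continuous_on_deriv])
  then show ?thesis
    by (intro borel_measurable_continuous_on_indicator) auto
qed

lemma nn_integral_deriv_ray_le: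
  assumes "Re w > 0"
  shows "(\<integral>\<^sup>+t. norm (indicator {0<..} t *\<^sub>R deriv f (w + of_real t)) \<partial>lborel) \<le> integral\<^sup>N lborel B_density"
proof -
  have "(\<integral>\<^sup>+t. norm (indicator {0<..} t *\<^sub>R deriv f (w + of_real t)) \<partial>lborel)
      \<le> (\<integral>\<^sup>+t. B_density (Re w + t) \<partial>lborel)"
  proof (rule nn_integral_mono)
    fix t :: real
    have "w + of_real t = Complex (Re w + t) (Im w)"
      by (simp add: complex_eq_iff)
    then show "ennreal (norm (indicator {0<..} t *\<^sub>R deriv f (w + of_real t))) \<le> B_density (Re w + t)"
      using assms norm_deriv_le_B_density[of "Re w + t" "Im w"] by (simp add: indicator_def)
  qed
  also have "\<dots> = integral\<^sup>N lborel B_density"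
    using nn_integral_real_affine[OF borel_measurable_B_density, of 1 "Re w"] by simp
  finally show ?thesis .
qed

lemma set_integrable_deriv_ray:
  assumes "Re w > 0"
  shows "set_integrable lborel {0<..} (\<lambda>t. deriv f (w + of_real t))"
  unfolding set_integrable_def
  using assms borel_measurable_deriv_ray nn_integral_deriv_ray_le nn_integral_B_density_finite
  by (intro integrableI_bounded) (auto intro: order.strict_trans1)

lemma has_vector_derivative_f_ray:
  assumes "w + of_real t \<in> rhp"
  shows "((\<lambda>t. f (w + of_real t)) has_vector_derivative deriv f (w + of_real t)) (at t)"
proof -
  have "((\<lambda>t. w + of_real t) has_vector_derivative 1) (at t)"
    by (auto intro!: derivative_eq_intros)
  then have "((f \<circ> (\<lambda>t. w + of_real t)) has_vector_derivative 1 * deriv f (w + of_real t)) (at t)"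
    by (rule field_vector_diff_chain_at) (rule holomorphic_derivI[OF f_holomorphic open_rhp assms])
  then show ?thesis
    by (simp add: o_def)
qed

definition ray_integral :: "complex \<Rightarrow> complex" where
  "ray_integral w = (LINT t:{0<..}|lborel. deriv f (w + of_real t))"

lemma f_eq_neg_ray_integral:
  assumes w: "Re w > 0"
  shows "f w = - ray_integral w"
proof -
  have "(LBINT t=ereal 0..\<infinity>. deriv f (w + of_real t)) = 0 - f w"
  proof (rule interval_integral_FTC_integrable)
    fix t :: real
    assume "ereal 0 < ereal t"
    then have "w + of_real t \<in> rhp"
      using w by (simp add: rhp_def)
    then show "((\<lambda>t. f (w + of_real t)) has_vector_derivative deriv f (w + of_real t)) (at t)"
      by (rule has_vector_derivative_f_ray)
    show "isCont (\<lambda>t. deriv f (w + of_real t)) t"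
      using isCont_along_ray[OF continuous_on_deriv, of w 1 t] \<open>w + of_real t \<in> rhp\<close> by simp
  next
    show "set_integrable lborel (einterval (ereal 0) \<infinity>) (\<lambda>t. deriv f (w + of_real t))"
      using set_integrable_deriv_ray[OF w] by simp
    have "w \<in> rhp"
      using w by (simp add: rhp_def)
    then have "isCont f w"
      using holomorphic_on_imp_continuous_on[OF f_holomorphic] continuous_on_eq_continuous_at[OF open_rhp] by blast
    moreover have "((\<lambda>t. w + of_real t) \<longlongrightarrow> w + of_real 0) (at_right 0)"
      by (intro tendsto_intros)
    ultimately have "((\<lambda>t. f (w + of_real t)) \<longlongrightarrow> f w) (at_right 0)"
      using isCont_tendsto_compose by fastforce
    then show "(((\<lambda>t. f (w + of_real t)) \<circ> real_of_ereal) \<longlongrightarrow> f w) (at_right (ereal 0))"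
      by (simp add: ereal_tendsto_simps1)
    have "((\<lambda>t. f (w + of_real t)) \<longlongrightarrow> 0) at_top"
      by (rule tendsto_compose_filtercomap_Re[OF tendsto_zero_at_infinity]) (simp, real_asymp)
    then show "(((\<lambda>t. f (w + of_real t)) \<circ> real_of_ereal) \<longlongrightarrow> 0) (at_left \<infinity>)"
      by (simp add: ereal_tendsto_simps1)
  qed simp
  moreover have "(LBINT t=ereal 0..\<infinity>. deriv f (w + of_real t)) = ray_integral w"
    by (simp add: ray_integral_def interval_lebesgue_integral_def einterval_def greaterThan_def)
  ultimately show ?thesis
    by (metis diff_0 minus_minus)
qed

definition B_norm :: real where
  "B_norm = enn2real (integral\<^sup>N lborel B_density)"

lemma B_norm_nonneg: "B_norm \<ge> 0"
  by (simp add: B_norm_def)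

lemma norm_le_B_norm:
  assumes w: "Re w > 0"
  shows "cmod (f w) \<le> B_norm"
proof -
  have "ennreal (cmod (f w)) = norm (LINT t:{0<..}|lborel. deriv f (w + of_real t))"
    using f_eq_neg_ray_integral[OF w] by (simp add: ray_integral_def)
  also have "\<dots> \<le> (\<integral>\<^sup>+t. norm (indicator {0<..} t *\<^sub>R deriv f (w + of_real t)) \<partial>lborel)"
    using set_integrable_deriv_ray[OF w] unfolding set_integrable_def set_lebesgue_integral_def
    by (rule integral_norm_bound_ennreal)
  also have "\<dots> \<le> integral\<^sup>N lborel B_density"
    using w by (rule nn_integral_deriv_ray_le)
  finally have "enn2real (ennreal (cmod (f w))) \<le> B_norm"
    unfolding B_norm_def using nn_integral_B_density_finite by (intro enn2real_mono) auto
  then show ?thesis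
    by simp
qed

lemma norm_higher_deriv_le:
  assumes w: "Re w > 0"
  shows "cmod ((deriv ^^ n) f w) \<le> fact n * B_norm / (Re w / 2) ^ n"
proof (rule Cauchy_inequality_halfplane[where a = 0])
  show "f holomorphic_on {u. 0 < Re u}"
    using f_holomorphic by (simp add: rhp_def)
  show "cmod (f u) \<le> B_norm" if "Re w - Re w / 2 \<le> Re u" for u
    using that w by (intro norm_le_B_norm) simp
qed (use w in auto)

lemma norm_deriv_le:
  assumes "Re w > 0"
  shows "cmod (deriv f w) \<le> 2 * B_norm / Re w"
  using norm_higher_deriv_le[OF assms, of 1] by (simp add: mult.commute)

lemma norm_deriv2_le:
  assumes "Re w > 0"
  shows "cmod (deriv (deriv f) w) \<le> 8 * B_norm / (Re w)\<^sup>2"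
  using norm_higher_deriv_le[OF assms, of 2] by (simp add: numeral_2_eq_2 power2_eq_square field_simps)

definition sup_deriv :: "real \<Rightarrow> real" where
  "sup_deriv s = enn2real (B_density s)"

lemma B_density_eq_sup_deriv: "B_density s = ennreal (sup_deriv s)"
proof (cases "s > 0")
  case True
  have "(SUP b::real. ennreal (cmod (deriv f (Complex s b)))) \<le> ennreal (2 * B_norm / s)"
  proof (rule SUP_least)
    fix b
    show "ennreal (cmod (deriv f (Complex s b))) \<le> ennreal (2 * B_norm / s)"
      using norm_deriv_le[of "Complex s b"] True by (intro ennreal_leI) simp
  qed
  then have "B_density s < \<infinity>"
    using True by (simp add: B_density_def order.strict_trans1)
  then show ?thesis
    by (simp add: sup_deriv_def)
qed (simp add: sup_deriv_def B_density_def)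

lemma sup_deriv_nonneg: "sup_deriv s \<ge> 0"
  by (simp add: sup_deriv_def)

lemma integrable_sup_deriv: "integrable lborel sup_deriv"
proof (rule integrableI_nonneg)
  show "sup_deriv \<in> borel_measurable lborel"
    unfolding sup_deriv_def[abs_def] using borel_measurable_B_density by measurable
  show "(\<integral>\<^sup>+s. ennreal (sup_deriv s) \<partial>lborel) < \<infinity>"
    using nn_integral_B_density_finite by (simp add: B_density_eq_sup_deriv[symmetric])
qed (simp add: sup_deriv_nonneg)

lemma norm_deriv_le_sup_deriv:
  assumes s: "0 < s" "s \<le> Re w"
  shows "cmod (deriv f w) \<le> sup_deriv s"
proof -
  have hol: "deriv f holomorphic_on {w. 0 < Re w}"
    using deriv_holomorphic by (simp add: rhp_def)
  have bnd: "cmod (deriv f u) \<le> 2 * B_norm / s" if "s \<le> Re u" for u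
  proof -
    have "cmod (deriv f u) \<le> 2 * B_norm / Re u"
      using norm_deriv_le[of u] that s by simp
    also have "\<dots> \<le> 2 * B_norm / s"
      using that s B_norm_nonneg by (intro divide_left_mono) auto
    finally show ?thesis .
  qed
  have line: "cmod (deriv f (Complex s b)) \<le> sup_deriv s" for b
    using norm_deriv_le_B_density[OF s(1), of b] by (simp add: B_density_eq_sup_deriv sup_deriv_nonneg)
  show ?thesis
    by (rule norm_le_on_halfplane_if_norm_le_on_line[OF hol s(1) bnd line s(2)])
qed

lemma continuous_on_ray_integral: "continuous_on {w. Re w \<ge> 0} ray_integral"
  unfolding continuous_on_eq_continuous_within
proof (intro ballI continuous_within_sequentiallyI)
  fix z :: complex and X :: "nat \<Rightarrow> complex"
  assume z: "z \<in> {w. Re w \<ge> 0}" and X: "X \<longlonglongrightarrow> z" "\<forall>n. X n \<in> {w. Re w \<ge> 0}"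
  have "(\<lambda>n. \<integral>t. indicator {0<..} t *\<^sub>R deriv f (X n + of_real t) \<partial>lborel)
      \<longlonglongrightarrow> (\<integral>t. indicator {0<..} t *\<^sub>R deriv f (z + of_real t) \<partial>lborel)"
  proof (rule integral_dominated_convergence[where w = sup_deriv])
    show "AE t in lborel. (\<lambda>n. indicator {0<..} t *\<^sub>R deriv f (X n + of_real t))
        \<longlonglongrightarrow> indicator {0<..} t *\<^sub>R deriv f (z + of_real t)"
    proof (rule AE_I2)
      fix t :: real
      show "(\<lambda>n. indicator {0<..} t *\<^sub>R deriv f (X n + of_real t)) \<longlonglongrightarrow> indicator {0<..} t *\<^sub>R deriv f (z + of_real t)"
      proof (cases "t > 0")
        case True
        then have "z + of_real t \<in> rhp"
          using z by (simp add: rhp_def)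
        then have "isCont (deriv f) (z + of_real t)"
          using continuous_on_deriv open_rhp continuous_on_eq_continuous_at by blast
        then have "(\<lambda>n. deriv f (X n + of_real t)) \<longlonglongrightarrow> deriv f (z + of_real t)"
          using X(1) by (intro isCont_tendsto_compose[where g = "deriv f"] tendsto_intros)
        then show ?thesis
          using True by simp
      qed simp
    qed
    show "AE t in lborel. norm (indicator {0<..} t *\<^sub>R deriv f (X n + of_real t)) \<le> sup_deriv t" for n
      using X(2) by (intro AE_I2) (simp add: indicator_def norm_deriv_le_sup_deriv sup_deriv_nonneg)
    show "(\<lambda>t. indicator {0<..} t *\<^sub>R deriv f (z + of_real t)) \<in> borel_measurable lborel"
      using borel_measurable_deriv_ray z by simp
    show "(\<lambda>t. indicator {0<..} t *\<^sub>R deriv f (X n + of_real t)) \<in> borel_measurable lborel" for n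
      using borel_measurable_deriv_ray X(2) by simp
  qed (rule integrable_sup_deriv)
  then show "(\<lambda>n. ray_integral (X n)) \<longlonglongrightarrow> ray_integral z"
    by (simp add: ray_integral_def set_lebesgue_integral_def)
qed

lemma tendsto_at_boundary:
  assumes z: "Re z \<ge> 0"
  shows "(f \<longlongrightarrow> - ray_integral z) (at z within rhp)"
proof -
  have "(ray_integral \<longlongrightarrow> ray_integral z) (at z within {w. Re w \<ge> 0})"
    using continuous_on_ray_integral z by (simp add: continuous_on_def)
  then have "(ray_integral \<longlongrightarrow> ray_integral z) (at z within rhp)"
    by (rule tendsto_within_subset) (auto simp: rhp_def)
  then have "((\<lambda>w. - ray_integral w) \<longlongrightarrow> - ray_integral z) (at z within rhp)"
    by (rule tendsto_minus)
  moreover have "eventually (\<lambda>w. - ray_integral w = f w) (at z within rhp)"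
    by (auto simp: eventually_at_filter rhp_def f_eq_neg_ray_integral)
  ultimately show ?thesis
    by (rule Lim_transform_eventually)
qed

lemma ext_val_eq_neg_ray_integral:
  assumes z: "Re z \<ge> 0"
  shows "ext_val f z = - ray_integral z"
proof -
  have "z islimpt rhp"
    unfolding islimpt_approachable
  proof (intro allI impI)
    fix e :: real
    assume "e > 0"
    then show "\<exists>w\<in>rhp. w \<noteq> z \<and> dist w z < e"
      using z by (intro bexI[of _ "z + of_real (e / 2)"]) (auto simp: rhp_def dist_norm)
  qed
  then have "at z within rhp \<noteq> bot"
    using trivial_limit_within by blast
  then show ?thesis
    unfolding ext_val_def using tendsto_at_boundary[OF z] by (rule tendsto_Lim)
qed

lemma norm_deriv_ray_le_window:
  assumes z: "Re z \<ge> 0" and t: "t > 0"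
  shows "cmod (of_real t * deriv f (z + of_real (2 * t))) \<le> (LINT s:{t..2*t}|lborel. sup_deriv s)"
proof -
  have "cmod (of_real t * deriv f (z + of_real (2 * t)))
      = (LINT s:{t..2*t}|lborel. cmod (deriv f (z + of_real (2 * t))))"
    using t by (simp add: set_integral_const norm_mult)
  also have "\<dots> \<le> (LINT s:{t..2*t}|lborel. sup_deriv s)"
  proof (rule set_integral_mono)
    show "set_integrable lborel {t..2*t} (\<lambda>s. cmod (deriv f (z + of_real (2 * t))))"
      unfolding set_integrable_def by (rule borel_integrable_compact) auto
    show "set_integrable lborel {t..2*t} sup_deriv"
      unfolding set_integrable_def using integrable_sup_deriv by (rule integrable_mult_indicator[rotated]) simp
    show "cmod (deriv f (z + of_real (2 * t))) \<le> sup_deriv s" if "s \<in> {t..2*t}" for s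
      using that t z by (intro norm_deriv_le_sup_deriv) auto
  qed
  finally show ?thesis .
qed

lemma tendsto_deriv_ray_at_top:
  assumes z: "Re z \<ge> 0"
  shows "((\<lambda>t. of_real t * deriv f (z + of_real (2 * t))) \<longlongrightarrow> 0) at_top"
proof (rule Lim_null_comparison)
  show "\<forall>\<^sub>F t in at_top. norm (of_real t * deriv f (z + of_real (2 * t))) \<le> (LINT s:{t..2*t}|lborel. sup_deriv s)"
    using eventually_gt_at_top[of 0] by eventually_elim (rule norm_deriv_ray_le_window[OF z])
  show "((\<lambda>t. LINT s:{t..2*t}|lborel. sup_deriv s) \<longlongrightarrow> 0) at_top"
    using integrable_sup_deriv
  proof (rule set_integral_window_tendsto_zero)
    show "\<forall>\<^sub>F t in at_top. s \<notin> {t..2*t}" for s :: real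
      using eventually_gt_at_top[of s] by eventually_elim auto
  qed
qed

lemma tendsto_deriv_ray_at_right_0:
  assumes z: "Re z \<ge> 0"
  shows "((\<lambda>t. of_real t * deriv f (z + of_real (2 * t))) \<longlongrightarrow> 0) (at_right 0)"
  unfolding filterlim_at_right_to_top
proof (rule Lim_null_comparison)
  show "\<forall>\<^sub>F x in at_top. norm (of_real (inverse x) * deriv f (z + of_real (2 * inverse x)))
      \<le> (LINT s:{inverse x..2 * inverse x}|lborel. sup_deriv s)"
    using eventually_gt_at_top[of 0] by eventually_elim (rule norm_deriv_ray_le_window[OF z], simp)
  show "((\<lambda>x. LINT s:{inverse x..2 * inverse x}|lborel. sup_deriv s) \<longlongrightarrow> 0) at_top"
    using integrable_sup_deriv eventually_notin_inverse_window by (rule set_integral_window_tendsto_zero)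
qed

lemma norm_deriv2_ray_le_sup_deriv:
  assumes z: "Re z \<ge> 0" and t: "t > 0"
  shows "cmod (of_real t * deriv (deriv f) (z + of_real (2 * t))) \<le> sup_deriv t"
proof -
  have "cmod ((deriv ^^ 1) (deriv f) (z + of_real (2 * t))) \<le> fact 1 * sup_deriv t / t ^ 1"
  proof (rule Cauchy_inequality_halfplane[where a = 0])
    show "deriv f holomorphic_on {u. 0 < Re u}"
      using deriv_holomorphic by (simp add: rhp_def)
    show "cmod (deriv f u) \<le> sup_deriv t" if "Re (z + of_real (2 * t)) - t \<le> Re u" for u
      using that z t by (intro norm_deriv_le_sup_deriv) auto
  qed (use z t in auto)
  then show ?thesis
    using t by (simp add: norm_mult field_simps)
qed

lemma set_integrable_deriv2_ray:
  assumes z: "Re z \<ge> 0"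
  shows "set_integrable lborel {0<..} (\<lambda>t. of_real t * deriv (deriv f) (z + of_real (2 * t)))"
  unfolding set_integrable_def
proof (rule Bochner_Integration.integrable_bound[OF integrable_sup_deriv])
  have "continuous_on {0<..} (\<lambda>t::real. z + of_real (2 * t))"
    by (intro continuous_intros)
  then have "continuous_on {0<..} (\<lambda>t. deriv (deriv f) (z + of_real (2 * t)))"
    using z holomorphic_on_imp_continuous_on[OF deriv2_holomorphic]
    by (auto simp: rhp_def intro: continuous_on_compose2)
  then have "continuous_on {0<..} (\<lambda>t. of_real t * deriv (deriv f) (z + of_real (2 * t)))"
    by (intro continuous_intros)
  then show "(\<lambda>t. indicator {0<..} t *\<^sub>R (of_real t * deriv (deriv f) (z + of_real (2 * t))))
      \<in> borel_measurable lborel"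
    by (simp add: borel_measurable_continuous_on_indicator)
  show "AE t in lborel. norm (indicator {0<..} t *\<^sub>R (of_real t * deriv (deriv f) (z + of_real (2 * t))))
      \<le> norm (sup_deriv t)"
    using norm_deriv2_ray_le_sup_deriv[OF z] sup_deriv_nonneg by (intro AE_I2) (simp add: indicator_def)
qed

lemma has_vector_derivative_deriv2_ray_primitive:
  assumes z: "Re z \<ge> 0" and t: "t > 0"
  shows "((\<lambda>t. of_real t * deriv f (z + of_real (2 * t)) / 2 - f (z + of_real (2 * t)) / 4)
    has_vector_derivative of_real t * deriv (deriv f) (z + of_real (2 * t))) (at t)"
proof -
  define p where "p = z + of_real (2 * t)"
  have p: "p \<in> rhp"
    using z t by (simp add: p_def rhp_def)
  have dg: "((\<lambda>s. z + 2 * s) has_field_derivative 2) (at (of_real t))"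
    by (auto intro!: derivative_eq_intros)
  have f': "((\<lambda>s. f (z + 2 * s)) has_field_derivative deriv f p * 2) (at (of_real t))"
    using DERIV_chain2[where f = f, OF _ dg] holomorphic_derivI[OF f_holomorphic open_rhp p]
    by (simp add: p_def)
  have f'': "((\<lambda>s. deriv f (z + 2 * s)) has_field_derivative deriv (deriv f) p * 2) (at (of_real t))"
    using DERIV_chain2[where f = "deriv f", OF _ dg] holomorphic_derivI[OF deriv_holomorphic open_rhp p]
    by (simp add: p_def)
  have "((\<lambda>s. s * deriv f (z + 2 * s) / 2 - f (z + 2 * s) / 4) has_field_derivative
      (of_real t * (deriv (deriv f) p * 2) + 1 * deriv f p) / 2 - deriv f p * 2 / 4) (at (of_real t))"
    using f' f'' by (auto intro!: derivative_eq_intros simp: p_def)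
  then have "((\<lambda>s. s * deriv f (z + 2 * s) / 2 - f (z + 2 * s) / 4) has_field_derivative
      of_real t * deriv (deriv f) p) (at (of_real t))"
    by (simp add: field_simps)
  then have "(((\<lambda>s. s * deriv f (z + 2 * s) / 2 - f (z + 2 * s) / 4) \<circ> of_real) has_vector_derivative
      1 * (of_real t * deriv (deriv f) p)) (at t)"
    by (intro field_vector_diff_chain_at) (auto intro!: derivative_eq_intros)
  then show ?thesis
    by (simp add: o_def p_def)
qed

lemma tendsto_ray_at_boundary:
  assumes z: "Re z \<ge> 0"
  shows "((\<lambda>t. f (z + of_real (2 * t))) \<longlongrightarrow> ext_val f z) (at_right 0)"
proof -
  have "filterlim (\<lambda>t. z + of_real (2 * t)) (at z within rhp) (at_right 0)"
  proof (rule filterlim_at_withinI)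
    show "((\<lambda>t. z + of_real (2 * t)) \<longlongrightarrow> z) (at_right 0)"
      by (auto intro!: tendsto_eq_intros)
    show "\<forall>\<^sub>F t in at_right 0. z + of_real (2 * t) \<in> rhp - {z}"
      using eventually_at_right_less[of 0] by eventually_elim (use z in \<open>auto simp: rhp_def\<close>)
  qed
  then show ?thesis
    using filterlim_compose[OF tendsto_at_boundary[OF z]] by (simp add: ext_val_eq_neg_ray_integral[OF z])
qed

text \<open>Integration by parts: the boundary terms vanish at infinity and tend to \<open>-ext_val f z / 4\<close> at \<open>0\<close>.\<close>
lemma integral_deriv2_ray:
  assumes z: "Re z \<ge> 0"
  shows "(LINT t:{0<..}|lborel. of_real t * deriv (deriv f) (z + of_real (2 * t))) = ext_val f z / 4"
proof -
  let ?F = "\<lambda>t. of_real t * deriv f (z + of_real (2 * t)) / 2 - f (z + of_real (2 * t)) / 4"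
  have "(LBINT t=ereal 0..\<infinity>. of_real t * deriv (deriv f) (z + of_real (2 * t))) = 0 - (- ext_val f z / 4)"
  proof (rule interval_integral_FTC_integrable[where F = ?F])
    fix t :: real
    assume "ereal 0 < ereal t"
    then have t: "t > 0"
      by simp
    show "(?F has_vector_derivative of_real t * deriv (deriv f) (z + of_real (2 * t))) (at t)"
      by (rule has_vector_derivative_deriv2_ray_primitive[OF z t])
    have "z + of_real (2 * t) \<in> rhp"
      using z t by (simp add: rhp_def)
    then have "isCont (\<lambda>t. deriv (deriv f) (z + of_real (2 * t))) t"
      by (rule isCont_along_ray[OF holomorphic_on_imp_continuous_on[OF deriv2_holomorphic]])
    then show "isCont (\<lambda>t. of_real t * deriv (deriv f) (z + of_real (2 * t))) t"
      by (intro continuous_intros)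
  next
    show "set_integrable lborel (einterval (ereal 0) \<infinity>) (\<lambda>t. of_real t * deriv (deriv f) (z + of_real (2 * t)))"
      using set_integrable_deriv2_ray[OF z] by (simp add: einterval_def greaterThan_def)
    have "(?F \<longlongrightarrow> 0 / 2 - ext_val f z / 4) (at_right 0)"
      using tendsto_ray_at_boundary[OF z] tendsto_deriv_ray_at_right_0[OF z] by (intro tendsto_intros) auto
    then show "((?F \<circ> real_of_ereal) \<longlongrightarrow> - ext_val f z / 4) (at_right (ereal 0))"
      by (simp add: ereal_tendsto_simps1)
    have "((\<lambda>t. f (z + of_real (2 * t))) \<longlongrightarrow> 0) at_top"
      by (rule tendsto_compose_filtercomap_Re[OF tendsto_zero_at_infinity]) (simp, real_asymp)
    then have "(?F \<longlongrightarrow> 0 / 2 - 0 / 4) at_top"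
      by (intro tendsto_intros tendsto_deriv_ray_at_top[OF z]) auto
    then show "((?F \<circ> real_of_ereal) \<longlongrightarrow> 0) (at_left \<infinity>)"
      by (simp add: ereal_tendsto_simps1)
  qed simp
  then show ?thesis
    by (simp add: interval_lebesgue_integral_def einterval_def greaterThan_def)
qed

lemma Poisson_integral_deriv2:
  assumes a: "a > 0" and z: "Re z \<ge> 0"
  shows "(\<integral>b. deriv (deriv f) (Complex a b) / of_real ((Re z + a)\<^sup>2 + (Im z - b)\<^sup>2) \<partial>lborel)
    = of_real (pi / (Re z + a)) * deriv (deriv f) (z + of_real (2 * a))"
proof -
  have "cmod (deriv (deriv f) w) \<le> 8 * B_norm / a\<^sup>2" if "a \<le> Re w" for w
  proof -
    have "cmod (deriv (deriv f) w) \<le> 8 * B_norm / (Re w)\<^sup>2"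
      using norm_deriv2_le[of w] that a by simp
    also have "\<dots> \<le> 8 * B_norm / a\<^sup>2"
      using that a B_norm_nonneg by (intro divide_left_mono power_mono mult_pos_pos) auto
    finally show ?thesis .
  qed
  moreover have "deriv (deriv f) holomorphic_on {w. 0 < Re w}"
    using deriv2_holomorphic by (simp add: rhp_def)
  ultimately have "has_bochner_integral lborel
      (\<lambda>b. deriv (deriv f) (Complex a b) / of_real ((Re z + a)\<^sup>2 + (Im z - b)\<^sup>2))
      (of_real (pi / (Re z + a)) * deriv (deriv f) (Complex (a + (Re z + a)) (Im z)))"
    using a z by (intro Poisson_integral_halfplane) auto
  moreover have "Complex (a + (Re z + a)) (Im z) = z + of_real (2 * a)"
    by (simp add: complex_eq_iff)
  ultimately show ?thesis
    by (simp add: has_bochner_integral_integral_eq)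
qed

lemma Poisson_double_integral:
  assumes z: "Re z \<ge> 0"
  shows "(\<integral>a. indicator {0<..} a *\<^sub>R (complex_of_real (a * (Re z + a)) *
      (\<integral>b. deriv (deriv f) (Complex a b) / complex_of_real ((Re z + a)\<^sup>2 + (Im z - b)\<^sup>2) \<partial>lborel)) \<partial>lborel)
    = of_real pi * (LINT t:{0<..}|lborel. of_real t * deriv (deriv f) (z + of_real (2 * t)))"
proof -
  have "indicator {0<..} a *\<^sub>R (complex_of_real (a * (Re z + a)) *
      (\<integral>b. deriv (deriv f) (Complex a b) / complex_of_real ((Re z + a)\<^sup>2 + (Im z - b)\<^sup>2) \<partial>lborel))
    = of_real pi * (indicator {0<..} a *\<^sub>R (of_real a * deriv (deriv f) (z + of_real (2 * a))))" for a
  proof (cases "a > 0")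
    case True
    have "a * (Re z + a) * (pi / (Re z + a)) = pi * a"
      using True z by (simp add: field_simps)
    then have coeff: "complex_of_real (a * (Re z + a)) * complex_of_real (pi / (Re z + a)) = of_real pi * of_real a"
      by (simp only: of_real_mult[symmetric])
    let ?D = "deriv (deriv f) (z + of_real (2 * a))"
    have "indicator {0<..} a *\<^sub>R (complex_of_real (a * (Re z + a)) *
        (\<integral>b. deriv (deriv f) (Complex a b) / complex_of_real ((Re z + a)\<^sup>2 + (Im z - b)\<^sup>2) \<partial>lborel))
      = complex_of_real (a * (Re z + a)) * (complex_of_real (pi / (Re z + a)) * ?D)"
      using True unfolding Poisson_integral_deriv2[OF True z] by simp
    also have "\<dots> = of_real pi * (of_real a * ?D)"
      by (simp only: mult.assoc[symmetric] coeff)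
    also have "\<dots> = of_real pi * (indicator {0<..} a *\<^sub>R (of_real a * ?D))"
      using True by simp
    finally show ?thesis .
  qed simp
  then show ?thesis
    unfolding set_lebesgue_integral_def by (simp only: integral_mult_right_zero)
qed

end

theorem mainTheorem2:
  fixes f :: "complex \<Rightarrow> complex" and z :: complex
  assumes "in_B0 f" and "Re z \<ge> 0"
  shows "ext_val f z =
    complex_of_real (4 / pi) *
      (\<integral> a. indicator {0<..} a *\<^sub>R
          (complex_of_real (a * (Re z + a)) *
            (\<integral> b. deriv (deriv f) (Complex a b) /
                 complex_of_real ((Re z + a)\<^sup>2 + (Im z - b)\<^sup>2) \<partial>lborel)) \<partial>lborel)"
proof -
  interpret B0_function f
    by unfold_locales (fact assms(1))
  show ?thesis
    unfolding Poisson_double_integral[OF assms(2)] integral_deriv2_ray[OF assms(2)]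
    by (simp add: field_simps)
qed

end
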